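(* For any $n<\omega$, a partial type $p(x)$ has dp-rank $\le n$ if and only if, for every formula $\varphi(x;y)$, the local dp-rank of $\varphi$ with respect to $p$ is $\le n$.
   Context: $T$ is a complete first-order theory and $\mathfrak{C}$ a monster model; $\mathfrak{C}_y$ denotes the $|y|$-tuples from $\mathfrak{C}$. "Indiscernible sequence" means an order-indiscernible (over $\emptyset$) sequence. For $C\subseteq\mathbb{R}$, $\sim_C$ is the equivalence relation on $\mathbb{Q}$ given by $i\sim_C j$ iff for all $c\in C$, ($c\le i \Leftrightarrow c\le j$) and ($i\le c\Leftrightarrow j\le c$). A partial type $p(x)$ has dp-rank $\le n$ if for every $a\models p$ and every indiscernible sequence $\langle b_i: i\in\mathbb{Q}\rangle$ (of tuples of any finite length) there is $C\subseteq\mathbb{R}$ with $|C|\le n$ such that for all $i,j\in\mathbb{Q}$ with $i\sim_C j$, $\mathrm{tp}(b_i/a)=\mathrm{tp}(b_j/a)$. The local dp-rank of a formula $\varphi(x;y)$ with respect to $p$ is $\le n$ if for every $a\models p$ and every indiscernible sequence $\langle b_i: i\in\mathbb{Q}\rangle$ in $\mathfrak{C}_y$ there is $C\subseteq\mathbb{R}$ with $|C|\le n$ such that for all $i,j\in\mathbb{Q}$ with $i\sim_C j$, $\models \varphi(a;b_i)\leftrightarrow\varphi(a;b_j)$. *)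

theory Defs
  imports Complex_Main
begin

text \<open>A first-order language: function symbols of type 'f and relation symbols
of type 'r; each symbol may be applied to argument lists of any length (so the
language is {(f,n)} for f of type 'f and n a natural number, similarly for relations).\<close>

datatype 'f trm = Var nat | App 'f "'f trm list"

datatype ('f, 'r) fm =
    FF
  | Eq "'f trm" "'f trm"
  | Rel 'r "'f trm list"
  | Neg "('f, 'r) fm"
  | Conj "('f, 'r) fm" "('f, 'r) fm"
  | Ex nat "('f, 'r) fm"

record ('a, 'f, 'r) fo_struct =
  univ :: "'a set"
  funs :: "'f \<Rightarrow> 'a list \<Rightarrow> 'a"
  rels :: "'r \<Rightarrow> 'a list \<Rightarrow> bool"

definition is_structure :: "('a, 'f, 'r) fo_struct \<Rightarrow> bool" where
  "is_structure M \<longleftrightarrow> univ M \<noteq> {} \<and>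
     (\<forall>f as. set as \<subseteq> univ M \<longrightarrow> funs M f as \<in> univ M)"

fun tvars :: "'f trm \<Rightarrow> nat set" where
  "tvars (Var i) = {i}"
| "tvars (App f ts) = (\<Union>t\<in>set ts. tvars t)"

fun fv :: "('f, 'r) fm \<Rightarrow> nat set" where
  "fv FF = {}"
| "fv (Eq s t) = tvars s \<union> tvars t"
| "fv (Rel r ts) = (\<Union>t\<in>set ts. tvars t)"
| "fv (Neg \<phi>) = fv \<phi>"
| "fv (Conj \<phi> \<psi>) = fv \<phi> \<union> fv \<psi>"
| "fv (Ex x \<phi>) = fv \<phi> - {x}"

fun teval :: "('a, 'f, 'r) fo_struct \<Rightarrow> (nat \<Rightarrow> 'a) \<Rightarrow> 'f trm \<Rightarrow> 'a" where
  "teval M e (Var i) = e i"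
| "teval M e (App f ts) = funs M f (map (teval M e) ts)"

fun sat :: "('a, 'f, 'r) fo_struct \<Rightarrow> (nat \<Rightarrow> 'a) \<Rightarrow> ('f, 'r) fm \<Rightarrow> bool" where
  "sat M e FF = False"
| "sat M e (Eq s t) = (teval M e s = teval M e t)"
| "sat M e (Rel r ts) = rels M r (map (teval M e) ts)"
| "sat M e (Neg \<phi>) = (\<not> sat M e \<phi>)"
| "sat M e (Conj \<phi> \<psi>) = (sat M e \<phi> \<and> sat M e \<psi>)"
| "sat M e (Ex x \<phi>) = (\<exists>d\<in>univ M. sat M (e(x := d)) \<phi>)"

text \<open>Satisfaction of a formula under the assignment of the tuple (list) as to the
variables 0, ..., length as - 1.  It is only used for formulas whose free variables
lie among these, so the value given to the remaining variables is irrelevant.\<close>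

definition env :: "('a, 'f, 'r) fo_struct \<Rightarrow> 'a list \<Rightarrow> nat \<Rightarrow> 'a" where
  "env M as = (\<lambda>i. if i < length as then as ! i else (SOME d. d \<in> univ M))"

definition satl :: "('a, 'f, 'r) fo_struct \<Rightarrow> ('f, 'r) fm \<Rightarrow> 'a list \<Rightarrow> bool" where
  "satl M \<phi> as \<longleftrightarrow> sat M (env M as) \<phi>"

definition tuples :: "('a, 'f, 'r) fo_struct \<Rightarrow> nat \<Rightarrow> 'a list set" where
  "tuples M m = {as. length as = m \<and> set as \<subseteq> univ M}"

text \<open>A set of formulas in one free variable x = variable 0 with parameters:
each element is a pair (phi, ps) meaning phi(x, ps), where the parameters ps are
assigned to the variables 1, ..., length ps.\<close>

definition params :: "(('f, 'r) fm \<times> 'a list) set \<Rightarrow> 'a set" where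
  "params \<Sigma> = (\<Union>(\<phi>, ps)\<in>\<Sigma>. set ps)"

definition small :: "('a, 'f, 'r) fo_struct \<Rightarrow> 'a set \<Rightarrow> bool" where
  "small M A \<longleftrightarrow> (card_of A, card_of (univ M)) \<in> ordLess"

definition realizes1 :: "('a, 'f, 'r) fo_struct \<Rightarrow> 'a \<Rightarrow> (('f, 'r) fm \<times> 'a list) set \<Rightarrow> bool" where
  "realizes1 M d \<Sigma> \<longleftrightarrow> d \<in> univ M \<and> (\<forall>(\<phi>, ps)\<in>\<Sigma>. satl M \<phi> (d # ps))"

definition one_type_over :: "('a, 'f, 'r) fo_struct \<Rightarrow> (('f, 'r) fm \<times> 'a list) set \<Rightarrow> bool" where
  "one_type_over M \<Sigma> \<longleftrightarrow>
     (\<forall>(\<phi>, ps)\<in>\<Sigma>. fv \<phi> \<subseteq> {..<Suc (length ps)} \<and> set ps \<subseteq> univ M)"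

text \<open>The complete theory T is
Th(M).\<close>

definition saturated :: "('a, 'f, 'r) fo_struct \<Rightarrow> bool" where
  "saturated M \<longleftrightarrow>
     (\<forall>\<Sigma>. one_type_over M \<Sigma> \<and> small M (params \<Sigma>) \<and>
          (\<forall>\<Sigma>0. finite \<Sigma>0 \<and> \<Sigma>0 \<subseteq> \<Sigma> \<longrightarrow> (\<exists>d. realizes1 M d \<Sigma>0))
        \<longrightarrow> (\<exists>d. realizes1 M d \<Sigma>))"

definition monster :: "('a, 'f, 'r) fo_struct \<Rightarrow> bool" where
  "monster M \<longleftrightarrow> is_structure M \<and> infinite (univ M) \<and>
     (card_of (UNIV :: ('f, 'r) fm set), card_of (univ M)) \<in> ordLess \<and>
     saturated M"

text \<open>A partial type p(x) with |x| = k: a set of formulas phi(x, ps) with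
parameters from a small set; x is assigned to variables 0..k-1 and the
parameters ps to variables k..k+length ps-1.\<close>

definition partial_type :: "('a, 'f, 'r) fo_struct \<Rightarrow> nat \<Rightarrow> (('f, 'r) fm \<times> 'a list) set \<Rightarrow> bool" where
  "partial_type M k p \<longleftrightarrow>
     (\<forall>(\<phi>, ps)\<in>p. fv \<phi> \<subseteq> {..<k + length ps} \<and> set ps \<subseteq> univ M) \<and>
     small M (params p)"

definition realizes :: "('a, 'f, 'r) fo_struct \<Rightarrow> nat \<Rightarrow> 'a list \<Rightarrow> (('f, 'r) fm \<times> 'a list) set \<Rightarrow> bool" where
  "realizes M k a p \<longleftrightarrow> a \<in> tuples M k \<and> (\<forall>(\<phi>, ps)\<in>p. satl M \<phi> (a @ ps))"

definition indiscernible :: "('a, 'f, 'r) fo_struct \<Rightarrow> nat \<Rightarrow> (rat \<Rightarrow> 'a list) \<Rightarrow> bool" where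
  "indiscernible M m b \<longleftrightarrow> (\<forall>i. b i \<in> tuples M m) \<and>
     (\<forall>\<phi> is js. sorted_wrt (<) is \<and> sorted_wrt (<) js \<and> length is = length js \<and>
        fv \<phi> \<subseteq> {..<m * length is} \<longrightarrow>
        (satl M \<phi> (concat (map b is)) \<longleftrightarrow> satl M \<phi> (concat (map b js))))"

text \<open>tp(u / a) = tp(v / a) for m-tuples u, v: they satisfy the same formulas
psi(y, a) (y assigned to variables 0..m-1, a to variables m..m+|a|-1).\<close>

definition same_tp :: "('a, 'f, 'r) fo_struct \<Rightarrow> nat \<Rightarrow> 'a list \<Rightarrow> 'a list \<Rightarrow> 'a list \<Rightarrow> bool" where
  "same_tp M m u v a \<longleftrightarrow>
     (\<forall>\<psi>. fv \<psi> \<subseteq> {..<m + length a} \<longrightarrow> (satl M \<psi> (u @ a) \<longleftrightarrow> satl M \<psi> (v @ a)))"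

definition sim :: "real set \<Rightarrow> rat \<Rightarrow> rat \<Rightarrow> bool" where
  "sim C i j \<longleftrightarrow> (\<forall>c\<in>C. (c \<le> of_rat i \<longleftrightarrow> c \<le> of_rat j) \<and> (of_rat i \<le> c \<longleftrightarrow> of_rat j \<le> c))"

definition dp_rank_le :: "('a, 'f, 'r) fo_struct \<Rightarrow> nat \<Rightarrow> (('f, 'r) fm \<times> 'a list) set \<Rightarrow> nat \<Rightarrow> bool" where
  "dp_rank_le M k p n \<longleftrightarrow>
     (\<forall>a m b. realizes M k a p \<and> indiscernible M m b \<longrightarrow>
        (\<exists>C. finite C \<and> card C \<le> n \<and>
           (\<forall>i j. sim C i j \<longrightarrow> same_tp M m (b i) (b j) a)))"

text \<open>Local dp-rank of phi(x;y), |x| = k (variables 0..k-1), |y| = m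
(variables k..k+m-1), with respect to p.\<close>

definition local_dp_rank_le :: "('a, 'f, 'r) fo_struct \<Rightarrow> nat \<Rightarrow> (('f, 'r) fm \<times> 'a list) set
    \<Rightarrow> ('f, 'r) fm \<Rightarrow> nat \<Rightarrow> nat \<Rightarrow> bool" where
  "local_dp_rank_le M k p \<phi> m n \<longleftrightarrow>
     (\<forall>a b. realizes M k a p \<and> indiscernible M m b \<longrightarrow>
        (\<exists>C. finite C \<and> card C \<le> n \<and>
           (\<forall>i j. sim C i j \<longrightarrow> (satl M \<phi> (a @ b i) \<longleftrightarrow> satl M \<phi> (a @ b j)))))"

end

theory Submission
  imports Defs
begin

text \<open>
  One direction is immediate: the truth value of \<phi>(a; y) is part of tp(y/a).

  For the converse fix a realizing p and an indiscernible sequence b_i.  For a formula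
  \<psi>(y; x), the map i \<mapsto> \<psi>(b_i; a) is constant on the classes of some finite set
  of cuts; the least such set consists of its breakpoints (the points near which it is not
  locally constant), and local dp-rank \<le> n bounds their number by n.  It suffices to see that
  the union D of these breakpoint sets over all \<psi> has at most n points, since D then works
  for the whole type.  If D contained points c_0 < ... < c_n, breakpoints of
  \<psi>_0, ..., \<psi>_n, choose order embeddings h_l of \<rat> into small disjoint
  neighbourhoods of the c_l with h_l(l) at c_l.  The sequence of concatenations
  b_(h_0(i)) ... b_(h_n(i)) is again indiscernible, and the exclusive or of the \<psi>_l
  evaluated on the l-th block has a breakpoint at each of 0, ..., n: near l only the l-th
  summand changes.  This contradicts local dp-rank \<le> n for that single formula.
\<close>

section \<open>Renaming variables\<close>

fun tren :: "(nat \<Rightarrow> nat) \<Rightarrow> 'f trm \<Rightarrow> 'f trm" where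
  "tren \<pi> (Var i) = Var (\<pi> i)"
| "tren \<pi> (App f ts) = App f (map (tren \<pi>) ts)"

fun ren :: "(nat \<Rightarrow> nat) \<Rightarrow> ('f, 'r) fm \<Rightarrow> ('f, 'r) fm" where
  "ren \<pi> FF = FF"
| "ren \<pi> (Eq s t) = Eq (tren \<pi> s) (tren \<pi> t)"
| "ren \<pi> (Rel r ts) = Rel r (map (tren \<pi>) ts)"
| "ren \<pi> (Neg \<phi>) = Neg (ren \<pi> \<phi>)"
| "ren \<pi> (Conj \<phi> \<psi>) = Conj (ren \<pi> \<phi>) (ren \<pi> \<psi>)"
| "ren \<pi> (Ex x \<phi>) = Ex (\<pi> x) (ren \<pi> \<phi>)"

lemma teval_tren: "teval M e (tren \<pi> t) = teval M (e \<circ> \<pi>) t"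
  by (induction t) (auto cong: map_cong)

lemma tvars_tren: "tvars (tren \<pi> t) = \<pi> ` tvars t"
  by (induction t) auto

lemma fv_ren: "inj \<pi> \<Longrightarrow> fv (ren \<pi> \<phi>) = \<pi> ` fv \<phi>"
  by (induction \<phi>) (auto simp: tvars_tren image_set_diff)

lemma sat_ren: "inj \<pi> \<Longrightarrow> sat M e (ren \<pi> \<phi>) = sat M (e \<circ> \<pi>) \<phi>"
proof (induction \<phi> arbitrary: e)
  case (Ex x \<phi>)
  have "(e(\<pi> x := d)) \<circ> \<pi> = (e \<circ> \<pi>)(x := d)" for d
    using Ex.prems by (auto simp: fun_eq_iff inj_eq)
  then show ?case
    using Ex.IH[OF Ex.prems] by (simp add: comp_def del: fun_upd_apply)
qed (auto simp: teval_tren comp_def)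

lemma teval_cong: "(\<And>v. v \<in> tvars t \<Longrightarrow> e1 v = e2 v) \<Longrightarrow> teval M e1 t = teval M e2 t"
proof (induction t)
  case (App f ts)
  then have "map (teval M e1) ts = map (teval M e2) ts"
    by (intro map_cong) auto
  then show ?case by (simp only: teval.simps)
qed simp

lemma sat_cong: "(\<And>v. v \<in> fv \<phi> \<Longrightarrow> e1 v = e2 v) \<Longrightarrow> sat M e1 \<phi> = sat M e2 \<phi>"
proof (induction \<phi> arbitrary: e1 e2)
  case (Eq s t)
  have "teval M e1 s = teval M e2 s" "teval M e1 t = teval M e2 t"
    using Eq.prems by (intro teval_cong; simp)+
  then show ?case by simp
next
  case (Rel r ts)
  have "map (teval M e1) ts = map (teval M e2) ts"
    using Rel.prems by (intro map_cong refl teval_cong) auto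
  then show ?case by (simp only: sat.simps)
next
  case (Conj \<phi>1 \<phi>2)
  have "sat M e1 \<phi>1 = sat M e2 \<phi>1" "sat M e1 \<phi>2 = sat M e2 \<phi>2"
    using Conj.prems by (intro Conj.IH; simp)+
  then show ?case by simp
next
  case (Ex x \<phi>)
  then have "sat M (e1(x := d)) \<phi> = sat M (e2(x := d)) \<phi>" for d
    by (intro Ex.IH) auto
  then show ?case by simp
next
  case (Neg \<phi>)
  then show ?case by (metis fv.simps(4) sat.simps(4))
qed simp

lemma satl_ren:
  assumes "inj \<pi>" "fv \<phi> \<subseteq> A"
    and "\<And>v. v \<in> A \<Longrightarrow> \<pi> v < length xs \<and> v < length ys \<and> xs ! \<pi> v = ys ! v"
  shows "satl M (ren \<pi> \<phi>) xs = satl M \<phi> ys"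
  unfolding satl_def sat_ren[OF assms(1)]
proof (rule sat_cong)
  fix v assume "v \<in> fv \<phi>"
  with assms(2,3) show "(env M xs \<circ> \<pi>) v = env M ys v"
    by (auto simp: env_def)
qed

definition swap_blocks :: "nat \<Rightarrow> nat \<Rightarrow> nat \<Rightarrow> nat" where
  "swap_blocks k m q = (if q < k then q + m else if q < k + m then q - k else q)"

lemma inj_swap_blocks: "inj (swap_blocks k m)"
  unfolding inj_def swap_blocks_def by auto

lemma fv_ren_swap_blocks:
  "fv \<phi> \<subseteq> {..<k + m} \<Longrightarrow> fv (ren (swap_blocks k m) \<phi>) \<subseteq> {..<m + k}"
  by (auto simp: fv_ren[OF inj_swap_blocks] swap_blocks_def)

lemma satl_ren_swap_blocks:
  assumes "fv \<phi> \<subseteq> {..<k + m}" "length a = k" "length u = m"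
  shows "satl M (ren (swap_blocks k m) \<phi>) (u @ a) = satl M \<phi> (a @ u)"
  by (rule satl_ren[OF inj_swap_blocks assms(1)])
    (use assms in \<open>auto simp: swap_blocks_def nth_append\<close>)

lemma length_realizes: "realizes M k a p \<Longrightarrow> length a = k"
  by (simp add: realizes_def tuples_def)

lemma length_indiscernible: "indiscernible M m b \<Longrightarrow> length (b i) = m"
  by (simp add: indiscernible_def tuples_def)

lemma local_dp_rank_le_if_dp_rank_le:
  assumes "dp_rank_le M k p n" "fv \<phi> \<subseteq> {..<k + m}"
  shows "local_dp_rank_le M k p \<phi> m n"
  unfolding local_dp_rank_le_def
proof (intro allI impI)
  fix a b assume ab: "realizes M k a p \<and> indiscernible M m b"
  then obtain C where C: "finite C" "card C \<le> n"
    and tp: "\<And>i j. sim C i j \<Longrightarrow> same_tp M m (b i) (b j) a"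
    using assms(1) unfolding dp_rank_le_def by blast
  have la: "length a = k" using ab length_realizes by blast
  have lb: "\<And>i. length (b i) = m" using ab length_indiscernible by blast
  have "satl M \<phi> (a @ b i) = satl M \<phi> (a @ b j)" if "sim C i j" for i j
  proof -
    let ?\<psi> = "ren (swap_blocks k m) \<phi>"
    have "satl M ?\<psi> (b i @ a) = satl M ?\<psi> (b j @ a)"
      using tp[OF that] fv_ren_swap_blocks[OF assms(2)] la
      unfolding same_tp_def by auto
    then show ?thesis
      by (simp only: satl_ren_swap_blocks[OF assms(2) la lb])
  qed
  with C show "\<exists>C. finite C \<and> card C \<le> n \<and>
      (\<forall>i j. sim C i j \<longrightarrow> satl M \<phi> (a @ b i) = satl M \<phi> (a @ b j))"
    by blast
qed

section \<open>Cuts of the rationals and breakpoints\<close>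

definition sim_invariant :: "real set \<Rightarrow> (rat \<Rightarrow> 'b) \<Rightarrow> bool" where
  "sim_invariant C f \<longleftrightarrow> (\<forall>i j. sim C i j \<longrightarrow> f i = f j)"

definition breakpoints :: "(rat \<Rightarrow> 'b) \<Rightarrow> real set" where
  "breakpoints f =
     {c. \<forall>\<epsilon>>0. \<exists>i j. \<bar>of_rat i - c\<bar> < \<epsilon> \<and> \<bar>of_rat j - c\<bar> < \<epsilon> \<and> f i \<noteq> f j}"

lemma sim_commute: "sim C i j \<longleftrightarrow> sim C j i"
  unfolding sim_def by blast

lemma sim_if_no_point_between:
  assumes "i \<le> j" "\<And>c. c \<in> C \<Longrightarrow> \<not> (of_rat i \<le> c \<and> c \<le> of_rat j)"
  shows "sim C i j"
  unfolding sim_def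
proof
  fix c assume "c \<in> C"
  have "of_rat i \<le> (of_rat j :: real)"
    using assms(1) by (simp only: of_rat_less_eq)
  with assms(2)[OF \<open>c \<in> C\<close>]
  show "(c \<le> of_rat i \<longleftrightarrow> c \<le> of_rat j) \<and> (of_rat i \<le> c \<longleftrightarrow> of_rat j \<le> c)"
    by linarith
qed

lemma no_point_between_if_sim:
  assumes "sim C i j" "i < j" "c \<in> C"
  shows "\<not> (of_rat i \<le> c \<and> c \<le> of_rat j)"
proof
  assume "of_rat i \<le> c \<and> c \<le> of_rat j"
  moreover have "(c \<le> of_rat i \<longleftrightarrow> c \<le> of_rat j) \<and> (of_rat i \<le> c \<longleftrightarrow> of_rat j \<le> c)"
    using assms(1,3) unfolding sim_def by blast
  moreover have "of_rat i < (of_rat j :: real)"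
    using assms(2) by (simp only: of_rat_less)
  ultimately show False by linarith
qed

lemma sim_invariant_eq_if_no_point_between:
  assumes "sim_invariant C f" "i \<le> j" "\<And>c. c \<in> C \<Longrightarrow> \<not> (of_rat i \<le> c \<and> c \<le> of_rat j)"
  shows "f i = f j"
  using assms(1) sim_if_no_point_between[OF assms(2,3)] unfolding sim_invariant_def by blast

lemma sim_invariantI:
  assumes "\<And>i j. i < j \<Longrightarrow> sim C i j \<Longrightarrow> f i = f j"
  shows "sim_invariant C f"
  unfolding sim_invariant_def
proof (intro allI impI)
  fix i j assume ij: "sim C i j"
  consider "i < j" | "i = j" | "j < i" by linarith
  then show "f i = f j"
  proof cases
    case 3
    then show ?thesis using assms[of j i] ij sim_commute by metis
  qed (use assms ij in simp_all)
qed

lemma sim_invariant_mono: "C \<subseteq> C' \<Longrightarrow> sim_invariant C f \<Longrightarrow> sim_invariant C' f"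
  unfolding sim_invariant_def sim_def by blast

lemma sim_invariant_constant_on_gap:
  assumes "sim_invariant C f" "\<And>c. c \<in> C \<Longrightarrow> c \<notin> {lo<..<hi}"
    and "of_rat x \<in> {lo<..<hi}" "of_rat y \<in> {lo<..<hi}"
  shows "f x = f y"
proof -
  have ordered: "f i = f j" if "i \<le> j" "of_rat i \<in> {lo<..<hi}" "of_rat j \<in> {lo<..<hi}"
    for i j
  proof (rule sim_invariant_eq_if_no_point_between[OF assms(1) \<open>i \<le> j\<close>])
    fix c assume "c \<in> C"
    then have "c \<notin> {lo<..<hi}" by (rule assms(2))
    with that(2,3) show "\<not> (of_rat i \<le> c \<and> c \<le> of_rat j)" by auto
  qed
  show ?thesis
  proof (cases "x \<le> y")
    case True
    then show ?thesis using ordered assms(3,4) by blast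
  next
    case False
    then show ?thesis using ordered[of y x] assms(3,4) by simp
  qed
qed

lemma breakpoints_subset:
  assumes "finite C" "sim_invariant C f"
  shows "breakpoints f \<subseteq> C"
proof
  fix c assume c: "c \<in> breakpoints f"
  show "c \<in> C"
  proof (rule ccontr)
    assume "c \<notin> C"
    define \<epsilon> where "\<epsilon> = Min (insert 1 ((\<lambda>x. \<bar>c - x\<bar>) ` C))"
    have "\<epsilon> > 0"
      unfolding \<epsilon>_def using assms(1) \<open>c \<notin> C\<close> by (auto simp: Min_gr_iff)
    then obtain i j where ij: "\<bar>of_rat i - c\<bar> < \<epsilon>" "\<bar>of_rat j - c\<bar> < \<epsilon>" "f i \<noteq> f j"
      using c unfolding breakpoints_def by blast
    have "x \<notin> {c - \<epsilon><..<c + \<epsilon>}" if "x \<in> C" for x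
    proof -
      have "\<epsilon> \<le> \<bar>c - x\<bar>"
        unfolding \<epsilon>_def using assms(1) that by auto
      then show ?thesis by auto
    qed
    moreover have "of_rat i \<in> {c - \<epsilon><..<c + \<epsilon>}" "of_rat j \<in> {c - \<epsilon><..<c + \<epsilon>}"
      using ij by (auto simp: abs_less_iff)
    ultimately have "f i = f j"
      by (rule sim_invariant_constant_on_gap[OF assms(2)])
    with ij(3) show False ..
  qed
qed

lemma not_in_breakpointsE:
  assumes "c \<notin> breakpoints f"
  obtains \<epsilon> where "\<epsilon> > 0"
    "\<And>x y. \<bar>of_rat x - c\<bar> < \<epsilon> \<Longrightarrow> \<bar>of_rat y - c\<bar> < \<epsilon> \<Longrightarrow> f x = f y"
proof -
  from assms obtain \<epsilon> where "\<epsilon> > 0"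
    and "\<not> (\<exists>i j. \<bar>of_rat i - c\<bar> < \<epsilon> \<and> \<bar>of_rat j - c\<bar> < \<epsilon> \<and> f i \<noteq> f j)"
    unfolding breakpoints_def by blast
  with that show thesis by blast
qed

lemma sim_invariant_Diff_non_breakpoint:
  assumes f: "sim_invariant C f" and c: "c \<notin> breakpoints f"
  shows "sim_invariant (C - {c}) f"
proof (rule sim_invariantI)
  fix i j assume "i < j" and ij: "sim (C - {c}) i j"
  have gap: "x \<notin> C" if "of_rat i \<le> x" "x \<le> of_rat j" "x \<noteq> c" for x
    using no_point_between_if_sim[OF ij \<open>i < j\<close>] that by blast
  show "f i = f j"
  proof (cases "of_rat i \<le> c \<and> c \<le> (of_rat j :: real)")
    case False
    show ?thesis
    proof (rule sim_invariant_eq_if_no_point_between[OF f])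
      show "i \<le> j" using \<open>i < j\<close> by simp
      fix x assume "x \<in> C"
      then show "\<not> (of_rat i \<le> x \<and> x \<le> of_rat j)" using gap[of x] False by blast
    qed
  next
    case True
    obtain \<epsilon> where "\<epsilon> > 0"
      and near: "\<And>x y. \<bar>of_rat x - c\<bar> < \<epsilon> \<Longrightarrow> \<bar>of_rat y - c\<bar> < \<epsilon> \<Longrightarrow> f x = f y"
      using not_in_breakpointsE[OF c] by blast
    obtain ri where ri: "\<bar>of_rat ri - c\<bar> < \<epsilon>" "f i = f ri"
    proof (cases "\<bar>of_rat i - c\<bar> < \<epsilon>")
      case False
      obtain r where r: "c - \<epsilon> < of_rat r" "of_rat r < c"
        using of_rat_dense[of "c - \<epsilon>" c] \<open>\<epsilon> > 0\<close> by auto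
      have "of_rat i \<le> (of_rat r :: real)"
        using False True r by (simp add: abs_less_iff)
      then have "f i = f r"
      proof (intro sim_invariant_eq_if_no_point_between[OF f])
        fix x assume "x \<in> C"
        then show "\<not> (of_rat i \<le> x \<and> x \<le> of_rat r)" using gap[of x] r True by fastforce
      qed (simp only: of_rat_less_eq)
      with r show ?thesis by (intro that[of r]) (auto simp: abs_less_iff)
    qed (use that in blast)
    obtain rj where rj: "\<bar>of_rat rj - c\<bar> < \<epsilon>" "f j = f rj"
    proof (cases "\<bar>of_rat j - c\<bar> < \<epsilon>")
      case False
      obtain r where r: "c < of_rat r" "of_rat r < c + \<epsilon>"
        using of_rat_dense[of c "c + \<epsilon>"] \<open>\<epsilon> > 0\<close> by auto
      have "of_rat r \<le> (of_rat j :: real)"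
        using False True r by (simp add: abs_less_iff)
      then have "f r = f j"
      proof (intro sim_invariant_eq_if_no_point_between[OF f])
        fix x assume "x \<in> C"
        then show "\<not> (of_rat r \<le> x \<and> x \<le> of_rat j)" using gap[of x] r True by fastforce
      qed (simp only: of_rat_less_eq)
      with r show ?thesis by (intro that[of r]) (auto simp: abs_less_iff)
    qed (use that in blast)
    from ri rj near[of ri rj] show ?thesis by simp
  qed
qed

lemma sim_invariant_breakpoints:
  assumes "finite C" "sim_invariant C f"
  shows "sim_invariant (breakpoints f) f"
proof -
  have remove: "sim_invariant (C - E) f" if "finite E" "E \<inter> breakpoints f = {}" for E
    using that
  proof (induction E rule: finite_induct)
    case empty
    then show ?case using assms(2) by simp
  next
    case (insert e E)
    then have "sim_invariant (C - E - {e}) f"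
      by (intro sim_invariant_Diff_non_breakpoint) blast+
    then show ?case by (simp only: Diff_insert[of C e E])
  qed
  have "sim_invariant (C - (C - breakpoints f)) f"
    using assms(1) by (intro remove) (simp, blast)
  moreover have "C - (C - breakpoints f) = breakpoints f"
    using breakpoints_subset[OF assms] by blast
  ultimately show ?thesis by simp
qed

section \<open>Moving a breakpoint by an order embedding\<close>

definition squash :: "rat \<Rightarrow> rat" where
  "squash x = x / (1 + \<bar>x\<bar>)"

lemma squash_denom_pos: "0 < 1 + \<bar>x :: rat\<bar>"
  by (simp add: add_pos_nonneg)

lemma abs_squash_less: "\<bar>squash x\<bar> < 1"
  unfolding squash_def using squash_denom_pos[of x] by (simp add: abs_divide)

lemma squash_neg: "x < 0 \<Longrightarrow> squash x < 0"
  unfolding squash_def by (simp add: divide_neg_pos squash_denom_pos)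

lemma squash_0 [simp]: "squash 0 = 0"
  by (simp add: squash_def)

lemma squash_pos: "0 < x \<Longrightarrow> 0 < squash x"
  unfolding squash_def by (simp add: squash_denom_pos)

lemma strict_mono_squash: "strict_mono squash"
proof
  fix x y :: rat assume "x < y"
  have "x * (1 + \<bar>y\<bar>) < y * (1 + \<bar>x\<bar>)"
    using \<open>x < y\<close> mult_nonpos_nonneg[of x y]
    by (cases "0 \<le> x"; cases "0 \<le> y") (auto simp: algebra_simps)
  then show "squash x < squash y"
    unfolding squash_def using squash_denom_pos[of x] squash_denom_pos[of y]
    by (simp add: divide_less_eq less_divide_eq mult.commute)
qed

definition focuses :: "(rat \<Rightarrow> rat) \<Rightarrow> rat \<Rightarrow> real \<Rightarrow> real \<Rightarrow> bool" where
  "focuses h q c \<delta> \<longleftrightarrow> strict_mono h \<and> (\<forall>i. \<bar>of_rat (h i) - c\<bar> < \<delta>) \<and>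
     (\<forall>i<q. of_rat (h i) < c) \<and> (\<forall>i>q. c < of_rat (h i)) \<and> (c \<in> \<rat> \<longrightarrow> of_rat (h q) = c)"

lemma ex_focuses:
  assumes "\<delta> > 0"
  shows "\<exists>h. focuses h q c \<delta>"
proof -
  obtain r1 r2 :: rat
    where r: "c - \<delta>/2 < of_rat r1" "of_rat r1 \<le> c" "c \<le> of_rat r2" "of_rat r2 < c + \<delta>/2"
      and rat: "c \<in> \<rat> \<Longrightarrow> of_rat r1 = c"
  proof (cases "c \<in> \<rat>")
    case True
    then obtain r where "c = of_rat r" by (blast elim: Rats_cases)
    with assms show ?thesis by (intro that[of r r]) auto
  next
    case False
    obtain r1 where "c - \<delta>/2 < of_rat r1" "of_rat r1 < c"
      using of_rat_dense[of "c - \<delta>/2" c] assms by auto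
    moreover obtain r2 where "c < of_rat r2" "of_rat r2 < c + \<delta>/2"
      using of_rat_dense[of c "c + \<delta>/2"] assms by auto
    ultimately show ?thesis using False by (intro that[of r1 r2]) auto
  qed
  obtain w :: rat where w: "0 < w" "of_rat w < \<delta>/2"
    using of_rat_dense[of 0 "\<delta>/2"] assms by auto
  define t where "t i = w * squash (i - q)" for i
  define h where "h i = (if i \<le> q then r1 else r2) + t i" for i
  have t_bound: "- (\<delta>/2) < of_rat (t i) \<and> of_rat (t i) < \<delta>/2" for i
  proof -
    have "\<bar>t i\<bar> < w"
      using w(1) abs_squash_less[of "i - q"] by (simp add: t_def abs_mult)
    then have "\<bar>of_rat (t i)\<bar> < (of_rat w :: real)"
      by (metis abs_of_rat of_rat_less)
    with w(2) show ?thesis by (simp only: abs_less_iff) linarith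
  qed
  have t_neg: "t i < 0" if "i < q" for i
    using that w(1) squash_neg[of "i - q"] by (simp add: t_def mult_pos_neg)
  have t_pos: "0 < t i" if "q < i" for i
    using that w(1) squash_pos[of "i - q"] by (simp add: t_def)
  have "strict_mono h"
  proof
    fix i j :: rat assume "i < j"
    have "t i < t j"
      using \<open>i < j\<close> w(1) strict_mono_squash by (simp add: t_def strict_mono_less)
    moreover have "r1 \<le> r2"
      using r by (metis of_rat_less_eq order.trans)
    moreover have "t i \<le> 0" if "i \<le> q"
      using t_neg[of i] that by (cases "i = q") (auto simp: t_def)
    ultimately show "h i < h j"
      using \<open>i < j\<close> t_pos[of j] by (auto simp: h_def)
  qed
  moreover have "\<bar>of_rat (h i) - c\<bar> < \<delta>" for i
    using r t_bound[of i] by (auto simp: h_def of_rat_add abs_less_iff)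
  moreover have "of_rat (h i) < c" if "i < q" for i
  proof -
    have "(of_rat (t i) :: real) < 0" using t_neg[OF that] by simp
    with that r(2) show ?thesis by (simp add: h_def of_rat_add del: of_rat_less_0_iff)
  qed
  moreover have "c < of_rat (h i)" if "q < i" for i
  proof -
    have "(of_rat (t i) :: real) > 0" using t_pos[OF that] by simp
    with that r(3) show ?thesis by (simp add: h_def of_rat_add del: zero_less_of_rat_iff)
  qed
  moreover have "c \<in> \<rat> \<Longrightarrow> of_rat (h q) = c"
    using rat by (simp add: h_def t_def)
  ultimately show ?thesis unfolding focuses_def by blast
qed

lemma isolated_point_gaps:
  fixes c \<delta> :: real
  assumes "\<And>x. x \<in> C \<Longrightarrow> x \<noteq> c \<Longrightarrow> \<delta> \<le> \<bar>x - c\<bar>" "z \<in> C"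
  shows "z \<notin> {c - \<delta><..<c}" "z \<notin> {c<..<c + \<delta>}"
proof (atomize (full), cases "z = c")
  case False
  with assms have "\<delta> \<le> \<bar>z - c\<bar>" by blast
  then show "z \<notin> {c - \<delta><..<c} \<and> z \<notin> {c<..<c + \<delta>}"
    by (auto simp: abs_if split: if_splits)
qed simp

lemma focuses_constant_sides:
  assumes f: "sim_invariant C f" and iso: "\<And>x. x \<in> C \<Longrightarrow> x \<noteq> c \<Longrightarrow> \<delta> \<le> \<bar>x - c\<bar>"
    and h: "focuses h q c \<delta>"
  shows "i < q \<Longrightarrow> j < q \<Longrightarrow> f (h i) = f (h j)"
    and "q < i \<Longrightarrow> q < j \<Longrightarrow> f (h i) = f (h j)"
proof -
  have near: "c - \<delta> < of_rat (h i) \<and> of_rat (h i) < c + \<delta>" for i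
  proof -
    from h have "\<bar>of_rat (h i) - c\<bar> < \<delta>" unfolding focuses_def by blast
    then show ?thesis by (simp add: abs_less_iff)
  qed
  have left: "of_rat (h i) < c" if "i < q" for i
    using h that unfolding focuses_def by blast
  have right: "c < of_rat (h i)" if "q < i" for i
    using h that unfolding focuses_def by blast
  show "i < q \<Longrightarrow> j < q \<Longrightarrow> f (h i) = f (h j)"
    using near[of i] near[of j] left[of i] left[of j]
    by (intro sim_invariant_constant_on_gap[OF f isolated_point_gaps(1)[OF iso]]) auto
  show "q < i \<Longrightarrow> q < j \<Longrightarrow> f (h i) = f (h j)"
    using near[of i] near[of j] right[of i] right[of j]
    by (intro sim_invariant_constant_on_gap[OF f isolated_point_gaps(2)[OF iso]]) auto
qed

lemma breakpoint_comp_focuses: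
  assumes f: "sim_invariant C f" and iso: "\<And>x. x \<in> C \<Longrightarrow> x \<noteq> c \<Longrightarrow> \<delta> \<le> \<bar>x - c\<bar>"
    and c: "c \<in> breakpoints f" and h: "focuses h q c \<delta>"
  shows "of_rat q \<in> breakpoints (f \<circ> h)"
  unfolding breakpoints_def
proof (intro CollectI allI impI)
  fix \<epsilon> :: real assume "\<epsilon> > 0"
  obtain e :: rat where e: "(0::real) < of_rat e" "of_rat e < \<epsilon>"
    using of_rat_dense[of 0 \<epsilon>] \<open>\<epsilon> > 0\<close> by auto
  let ?I = "{q - e, q, q + e}"
  have near: "\<bar>of_rat i - of_rat q\<bar> < \<epsilon>" if "i \<in> ?I" for i
    using that e \<open>\<epsilon> > 0\<close> by (auto simp: of_rat_add of_rat_diff)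
  have hq: "of_rat (h (q - e)) < c" "c < of_rat (h (q + e))"
    using h e unfolding focuses_def by auto
  have hI: "\<bar>of_rat (h i) - c\<bar> < \<delta>" for i
    using h unfolding focuses_def by blast
  have rep: "\<exists>i\<in>?I. f z = f (h i)" if z: "\<bar>of_rat z - c\<bar> < \<delta>" for z
  proof -
    consider "of_rat z < c" | "of_rat z = c" | "c < of_rat z" by fastforce
    then show ?thesis
    proof cases
      case 1
      then have "f z = f (h (q - e))"
        using z hq(1) hI[of "q - e"]
        by (intro sim_invariant_constant_on_gap[OF f isolated_point_gaps(1)[OF iso]])
          (auto simp: abs_less_iff)
      then show ?thesis by blast
    next
      case 2
      then have "c \<in> \<rat>" by (metis Rats_of_rat)
      with h have "of_rat (h q) = c" unfolding focuses_def by blast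
      with 2 have "h q = z" by (metis of_rat_eq_iff)
      then show ?thesis by blast
    next
      case 3
      then have "f z = f (h (q + e))"
        using z hq(2) hI[of "q + e"]
        by (intro sim_invariant_constant_on_gap[OF f isolated_point_gaps(2)[OF iso]])
          (auto simp: abs_less_iff)
      then show ?thesis by blast
    qed
  qed
  have "\<delta> > 0"
    using hI[of 0] by linarith
  with c obtain x y where xy: "\<bar>of_rat x - c\<bar> < \<delta>" "\<bar>of_rat y - c\<bar> < \<delta>" "f x \<noteq> f y"
    unfolding breakpoints_def by blast
  obtain i j where "i \<in> ?I" "j \<in> ?I" "f x = f (h i)" "f y = f (h j)"
    using rep[OF xy(1)] rep[OF xy(2)] by blast
  with xy(3) near show "\<exists>i j. \<bar>of_rat i - of_rat q\<bar> < \<epsilon> \<and> \<bar>of_rat j - of_rat q\<bar> < \<epsilon> \<and>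
      (f \<circ> h) i \<noteq> (f \<circ> h) j"
    by (intro exI[of _ i] exI[of _ j]) auto
qed

section \<open>Breakpoints of an exclusive or\<close>

definition xor_list :: "bool list \<Rightarrow> bool" where
  "xor_list bs = foldr (\<noteq>) bs False"

lemma xor_list_flip: "l < length bs \<Longrightarrow> xor_list (bs[l := \<not> bs ! l]) = (\<not> xor_list bs)"
proof (induction bs arbitrary: l)
  case (Cons b bs)
  then show ?case by (cases l) (auto simp: xor_list_def)
qed simp

lemma xor_list_differ_at_one:
  assumes "length cs = length bs" "l < length bs" "cs ! l \<noteq> bs ! l"
    and "\<And>q. q < length bs \<Longrightarrow> q \<noteq> l \<Longrightarrow> cs ! q = bs ! q"
  shows "xor_list cs \<noteq> xor_list bs"
proof -
  have "cs = bs[l := \<not> bs ! l]"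
    using assms by (intro nth_equalityI) (auto simp: nth_list_update)
  with assms(2) show ?thesis by (simp add: xor_list_flip)
qed

lemma breakpoint_xor_list:
  assumes "l < N" "c \<in> breakpoints (g l)" "\<rho> > 0"
    and const: "\<And>l' i j. l' < N \<Longrightarrow> l' \<noteq> l \<Longrightarrow> \<bar>of_rat i - c\<bar> < \<rho> \<Longrightarrow> \<bar>of_rat j - c\<bar> < \<rho> \<Longrightarrow>
      g l' i = g l' j"
  shows "c \<in> breakpoints (\<lambda>i. xor_list (map (\<lambda>l. g l i) [0..<N]))"
  unfolding breakpoints_def
proof (intro CollectI allI impI)
  fix \<epsilon> :: real assume "\<epsilon> > 0"
  with assms(3) have "min \<epsilon> \<rho> > 0" by simp
  moreover have "\<forall>\<epsilon>>0. \<exists>i j. \<bar>of_rat i - c\<bar> < \<epsilon> \<and> \<bar>of_rat j - c\<bar> < \<epsilon> \<and> g l i \<noteq> g l j"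
    using assms(2) unfolding breakpoints_def by simp
  ultimately obtain i j
    where ij: "\<bar>of_rat i - c\<bar> < min \<epsilon> \<rho>" "\<bar>of_rat j - c\<bar> < min \<epsilon> \<rho>" "g l i \<noteq> g l j"
    by blast
  have "xor_list (map (\<lambda>l. g l i) [0..<N]) \<noteq> xor_list (map (\<lambda>l. g l j) [0..<N])"
  proof (rule xor_list_differ_at_one)
    fix q assume "q < length (map (\<lambda>l. g l j) [0..<N])" "q \<noteq> l"
    then have "q < N" by simp
    with \<open>q \<noteq> l\<close> ij(1,2) have "g q i = g q j"
      by (intro const) simp_all
    with \<open>q < N\<close> show "map (\<lambda>l. g l i) [0..<N] ! q = map (\<lambda>l. g l j) [0..<N] ! q"
      by simp
  qed (use assms(1) ij(3) in simp_all)
  with ij show "\<exists>i j. \<bar>of_rat i - c\<bar> < \<epsilon> \<and> \<bar>of_rat j - c\<bar> < \<epsilon> \<and>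
      xor_list (map (\<lambda>l. g l i) [0..<N]) \<noteq> xor_list (map (\<lambda>l. g l j) [0..<N])"
    by (intro exI[of _ i] exI[of _ j]) simp
qed

lemma breakpoint_xor_focused:
  assumes "l < N"
    and inv: "\<And>l. l < N \<Longrightarrow> sim_invariant (Cs l) (fs l)"
    and iso: "\<And>l x. l < N \<Longrightarrow> x \<in> Cs l \<Longrightarrow> x \<noteq> c l \<Longrightarrow> \<delta> \<le> \<bar>x - c l\<bar>"
    and foc: "\<And>l. l < N \<Longrightarrow> focuses (hs l) (of_nat l) (c l) \<delta>"
    and "c l \<in> breakpoints (fs l)"
  shows "real l \<in> breakpoints (\<lambda>i. xor_list (map (\<lambda>l. fs l (hs l i)) [0..<N]))"
proof (rule breakpoint_xor_list[where g = "\<lambda>l i. fs l (hs l i)" and \<rho> = "1/2"])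
  show "real l \<in> breakpoints (\<lambda>i. fs l (hs l i))"
    using breakpoint_comp_focuses[OF inv iso \<open>c l \<in> breakpoints (fs l)\<close> foc] \<open>l < N\<close>
    by (simp add: comp_def)
next
  fix l' i j
  assume l': "l' < N" "l' \<noteq> l" and ij: "\<bar>of_rat i - real l\<bar> < 1/2" "\<bar>of_rat j - real l\<bar> < 1/2"
  consider "l' < l" | "l < l'" using l'(2) by linarith
  then show "fs l' (hs l' i) = fs l' (hs l' j)"
  proof cases
    case 1
    then have "real l' + 1 \<le> real l" by simp
    with ij have "of_rat (of_nat l') < (of_rat i :: real)" "of_rat (of_nat l') < (of_rat j :: real)"
      unfolding abs_less_iff of_rat_of_nat_eq by linarith+
    then have "of_nat l' < i" "of_nat l' < j" by (simp_all only: of_rat_less)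
    then show ?thesis
      using focuses_constant_sides(2)[OF inv[OF l'(1)] iso[OF l'(1)] foc[OF l'(1)]] by blast
  next
    case 2
    then have "real l + 1 \<le> real l'" by simp
    with ij have "(of_rat i :: real) < of_rat (of_nat l')" "(of_rat j :: real) < of_rat (of_nat l')"
      unfolding abs_less_iff of_rat_of_nat_eq by linarith+
    then have "i < of_nat l'" "j < of_nat l'" by (simp_all only: of_rat_less)
    then show ?thesis
      using focuses_constant_sides(1)[OF inv[OF l'(1)] iso[OF l'(1)] foc[OF l'(1)]] by blast
  qed
qed (use \<open>l < N\<close> in simp_all)

lemma finite_separated:
  fixes A :: "real set"
  assumes "finite A"
  obtains \<delta> where "\<delta> > 0" "\<And>x y. x \<in> A \<Longrightarrow> y \<in> A \<Longrightarrow> x \<noteq> y \<Longrightarrow> \<delta> \<le> \<bar>x - y\<bar>"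
proof -
  define D where "D = (\<lambda>(x, y). \<bar>x - y\<bar>) ` {(x, y) \<in> A \<times> A. x \<noteq> y}"
  have "finite D"
    unfolding D_def using assms by (auto intro: finite_subset[of _ "A \<times> A"])
  show thesis
  proof (rule that[of "Min (insert 1 D)"])
    show "Min (insert 1 D) > 0"
      using \<open>finite D\<close> by (auto simp: D_def)
    fix x y assume "x \<in> A" "y \<in> A" "x \<noteq> y"
    then have "\<bar>x - y\<bar> \<in> D" unfolding D_def by force
    with \<open>finite D\<close> show "Min (insert 1 D) \<le> \<bar>x - y\<bar>" by simp
  qed
qed

lemma obtain_sorted_points:
  fixes D :: "'a :: linorder set"
  assumes "\<not> (finite D \<and> card D \<le> n)"
  obtains cs where "sorted_wrt (<) cs" "length cs = Suc n" "set cs \<subseteq> D"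
proof -
  obtain S where S: "S \<subseteq> D" "finite S" "card S = Suc n"
  proof (cases "finite D")
    case True
    with assms have "Suc n \<le> card D" by simp
    with that show ?thesis by (metis obtain_subset_with_card_n)
  next
    case False
    with that show ?thesis by (metis infinite_arbitrarily_large)
  qed
  show thesis
    using that[of "sorted_list_of_set S"] S by simp
qed

lemma obtain_separated_focuses:
  assumes cs: "sorted_wrt (<) cs" and fin: "\<And>l. l < length cs \<Longrightarrow> finite (Cs l)"
  obtains \<delta> hs
  where "\<And>l x. l < length cs \<Longrightarrow> x \<in> Cs l \<Longrightarrow> x \<noteq> cs ! l \<Longrightarrow> \<delta> \<le> \<bar>x - cs ! l\<bar>"
    and "\<And>l. focuses (hs l) (of_nat l) (cs ! l) \<delta>"
    and "\<And>l l' i i'. l < l' \<Longrightarrow> l' < length cs \<Longrightarrow> hs l i < hs l' i'"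
proof -
  let ?A = "set cs \<union> (\<Union>l<length cs. Cs l)"
  have "finite ?A" using fin by auto
  then obtain \<delta>3 where "\<delta>3 > 0"
    and \<delta>3: "\<And>x y. x \<in> ?A \<Longrightarrow> y \<in> ?A \<Longrightarrow> x \<noteq> y \<Longrightarrow> \<delta>3 \<le> \<bar>x - y\<bar>"
    by (rule finite_separated) (rule that)
  define \<delta> where "\<delta> = \<delta>3 / 3"
  have "\<delta> > 0" using \<open>\<delta>3 > 0\<close> by (simp add: \<delta>_def)
  have iso: "\<delta> \<le> \<bar>x - cs ! l\<bar>" if "l < length cs" "x \<in> Cs l" "x \<noteq> cs ! l" for l x
  proof -
    have "\<delta>3 \<le> \<bar>x - cs ! l\<bar>"
      using that by (intro \<delta>3) auto
    with \<open>\<delta>3 > 0\<close> show ?thesis by (simp add: \<delta>_def)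
  qed
  have "\<forall>l. \<exists>h. focuses h (of_nat l) (cs ! l) \<delta>"
    using ex_focuses[OF \<open>\<delta> > 0\<close>] by blast
  then obtain hs where hs: "\<And>l. focuses (hs l) (of_nat l) (cs ! l) \<delta>"
    by (metis choice)
  have "hs l i < hs l' i'" if "l < l'" "l' < length cs" for l l' i i'
  proof -
    have "cs ! l < cs ! l'"
      using cs that by (simp add: sorted_wrt_iff_nth_less)
    moreover have "\<delta>3 \<le> \<bar>cs ! l - cs ! l'\<bar>"
      using \<delta>3[of "cs ! l" "cs ! l'"] that calculation by simp
    moreover have "\<bar>of_rat (hs l i) - cs ! l\<bar> < \<delta>" "\<bar>of_rat (hs l' i') - cs ! l'\<bar> < \<delta>"
      using hs unfolding focuses_def by blast+
    ultimately have "(of_rat (hs l i) :: real) < of_rat (hs l' i')"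
      unfolding \<delta>_def abs_less_iff by linarith
    then show ?thesis by (simp only: of_rat_less)
  qed
  with iso hs show thesis by (rule that)
qed

lemma card_Union_breakpoints_le:
  fixes F :: "(rat \<Rightarrow> bool) set"
  assumes inv: "\<And>f. f \<in> F \<Longrightarrow> \<exists>C. finite C \<and> sim_invariant C f"
    and xor: "\<And>N fs hs. (\<And>l. l < N \<Longrightarrow> fs l \<in> F) \<Longrightarrow> (\<And>l. l < N \<Longrightarrow> strict_mono (hs l)) \<Longrightarrow>
      (\<And>l l' i i'. l < l' \<Longrightarrow> l' < N \<Longrightarrow> hs l i < hs l' i') \<Longrightarrow>
      \<exists>C. finite C \<and> card C \<le> n \<and> sim_invariant C (\<lambda>i. xor_list (map (\<lambda>l. fs l (hs l i)) [0..<N]))"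
  shows "finite (\<Union>f\<in>F. breakpoints f) \<and> card (\<Union>f\<in>F. breakpoints f) \<le> n"
proof (rule ccontr)
  let ?N = "Suc n"
  assume "\<not> ?thesis"
  then obtain cs where cs: "sorted_wrt (<) cs" "length cs = ?N" "set cs \<subseteq> (\<Union>f\<in>F. breakpoints f)"
    by (rule obtain_sorted_points)
  have "\<forall>l\<in>{..<?N}. \<exists>f. f \<in> F \<and> cs ! l \<in> breakpoints f"
  proof
    fix l assume "l \<in> {..<?N}"
    with cs(2) have "cs ! l \<in> set cs" by simp
    with cs(3) show "\<exists>f. f \<in> F \<and> cs ! l \<in> breakpoints f" by blast
  qed
  from bchoice[OF this] obtain fs
    where fs: "\<forall>l\<in>{..<?N}. fs l \<in> F \<and> cs ! l \<in> breakpoints (fs l)"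
    by blast
  have "\<forall>l\<in>{..<?N}. \<exists>C. finite C \<and> sim_invariant C (fs l)"
    using fs inv by blast
  from bchoice[OF this] obtain Cs
    where Cs: "\<forall>l\<in>{..<?N}. finite (Cs l) \<and> sim_invariant (Cs l) (fs l)"
    by blast
  have "\<And>l. l < length cs \<Longrightarrow> finite (Cs l)"
    using Cs cs(2) by simp
  then obtain \<delta> hs
    where iso: "\<And>l x. l < length cs \<Longrightarrow> x \<in> Cs l \<Longrightarrow> x \<noteq> cs ! l \<Longrightarrow> \<delta> \<le> \<bar>x - cs ! l\<bar>"
      and hs: "\<And>l. focuses (hs l) (of_nat l) (cs ! l) \<delta>"
      and sep: "\<And>l l' i i'. l < l' \<Longrightarrow> l' < length cs \<Longrightarrow> hs l i < hs l' i'"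
    using obtain_separated_focuses[OF cs(1)] by blast
  have "\<And>l. l < ?N \<Longrightarrow> fs l \<in> F" "\<And>l. strict_mono (hs l)"
    using fs hs unfolding focuses_def by simp_all
  with sep[unfolded cs(2)] obtain C where C: "finite C" "card C \<le> n"
    and "sim_invariant C (\<lambda>i. xor_list (map (\<lambda>l. fs l (hs l i)) [0..<?N]))"
    using xor[of ?N fs hs] by blast
  then have "breakpoints (\<lambda>i. xor_list (map (\<lambda>l. fs l (hs l i)) [0..<?N])) \<subseteq> C"
    by (intro breakpoints_subset)
  moreover have "real l \<in> breakpoints (\<lambda>i. xor_list (map (\<lambda>l. fs l (hs l i)) [0..<?N]))"
    if "l < ?N" for l
    using that Cs iso[unfolded cs(2)] hs fs by (intro breakpoint_xor_focused) auto
  ultimately have "of_nat ` {..<?N} \<subseteq> C" by auto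
  then have "card (of_nat ` {..<?N} :: real set) \<le> card C"
    using C(1) by (rule card_mono[rotated])
  with C(2) show False by (simp add: card_image)
qed

section \<open>Concatenating blocks of an indiscernible sequence\<close>

lemma length_concat_uniform:
  "(\<forall>x\<in>set xs. length x = m) \<Longrightarrow> length (concat xs) = length xs * m"
  by (induction xs) auto

lemma nth_concat_uniform:
  assumes "\<forall>x\<in>set xs. length x = m" "p < length xs" "j < m"
  shows "concat xs ! (p * m + j) = xs ! p ! j"
  using assms
proof (induction xs arbitrary: p)
  case (Cons x xs)
  then show ?case
    by (cases p) (auto simp: nth_append)
qed simp

lemma block_index_less: "l < T \<Longrightarrow> j < (m :: nat) \<Longrightarrow> l * m + j < T * m"
proof -
  assume "l < T" "j < m"
  then have "l * m + j < (l + 1) * m" by simp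
  also have "\<dots> \<le> T * m" using \<open>l < T\<close> by (intro mult_right_mono) auto
  finally show ?thesis .
qed

lemma div_mod_mult_add: "(j :: nat) < m \<Longrightarrow> (a * m + j) div m = a \<and> (a * m + j) mod m = j"
  by auto

definition block_seq :: "nat \<Rightarrow> (nat \<Rightarrow> rat \<Rightarrow> rat) \<Rightarrow> (rat \<Rightarrow> 'a list) \<Rightarrow> rat \<Rightarrow> 'a list" where
  "block_seq T hs b i = concat (map (\<lambda>l. b (hs l i)) [0..<T])"

definition block_indices :: "nat \<Rightarrow> (nat \<Rightarrow> rat \<Rightarrow> rat) \<Rightarrow> rat list \<Rightarrow> rat list" where
  "block_indices T hs is = concat (map (\<lambda>l. map (hs l) is) [0..<T])"

lemma length_block_seq: "(\<And>i. length (b i) = m) \<Longrightarrow> length (block_seq T hs b i) = T * m"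
  unfolding block_seq_def by (subst length_concat_uniform) auto

lemma length_block_indices: "length (block_indices T hs is) = T * length is"
  unfolding block_indices_def by (subst length_concat_uniform) auto

lemma nth_block_seq:
  "(\<And>i. length (b i) = m) \<Longrightarrow> l < T \<Longrightarrow> j < m \<Longrightarrow> block_seq T hs b i ! (l * m + j) = b (hs l i) ! j"
  unfolding block_seq_def by (subst nth_concat_uniform) auto

lemma nth_block_indices:
  "l < T \<Longrightarrow> p < length is \<Longrightarrow> block_indices T hs is ! (l * length is + p) = hs l (is ! p)"
  unfolding block_indices_def by (subst nth_concat_uniform) auto

lemma sorted_block_indices:
  assumes "\<And>l. l < T \<Longrightarrow> strict_mono (hs l)"
    and "\<And>l l' i i'. l < l' \<Longrightarrow> l' < T \<Longrightarrow> hs l i < hs l' i'"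
    and "sorted_wrt (<) is"
  shows "sorted_wrt (<) (block_indices T hs is)"
  using assms(1,2) unfolding block_indices_def
proof (induction T)
  case (Suc T)
  have "sorted_wrt (<) (map (hs T) is)"
    using assms(3) Suc.prems(1)[of T]
    by (auto simp: sorted_wrt_map strict_mono_less elim!: sorted_wrt_mono_rel[rotated])
  with Suc show ?case by (auto simp: sorted_wrt_append)
qed simp

text \<open>Entry j of block l of the p-th tuple in concat (map (block_seq T hs b) is) sits at
  position p T m + l m + j; in concat (map b (block_indices T hs is)) the same entry sits at
  position (l L + p) m + j, where L = length is.\<close>

definition transpose_blocks :: "nat \<Rightarrow> nat \<Rightarrow> nat \<Rightarrow> nat \<Rightarrow> nat" where
  "transpose_blocks T m L q =
     (if q < T * m * L then ((q mod (T * m)) div m * L + q div (T * m)) * m + q mod (T * m) mod m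
      else q)"

lemma transpose_blocks_decomp:
  assumes "q < T * m * L"
  obtains p l j where "p < L" "l < T" "j < m" "q = p * (T * m) + (l * m + j)"
    "transpose_blocks T m L q = (l * L + p) * m + j"
proof -
  have "T * m > 0" using assms by (cases "T * m = 0") auto
  define p where "p = q div (T * m)"
  define r where "r = q mod (T * m)"
  have "p < L"
    using assms \<open>T * m > 0\<close> unfolding p_def by (simp add: less_mult_imp_div_less mult.commute)
  moreover have "r div m < T"
    using \<open>T * m > 0\<close> by (simp add: r_def less_mult_imp_div_less)
  moreover have "r mod m < m"
    using \<open>T * m > 0\<close> by simp
  moreover have "q = p * (T * m) + (r div m * m + r mod m)"
    unfolding p_def r_def by (simp add: div_mult_mod_eq)
  moreover have "transpose_blocks T m L q = (r div m * L + p) * m + r mod m"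
    using assms unfolding transpose_blocks_def p_def r_def by simp
  ultimately show ?thesis using that by blast
qed

lemma transpose_blocks_less: "q < T * m * L \<Longrightarrow> transpose_blocks T m L q < T * m * L"
proof -
  assume "q < T * m * L"
  then obtain p l j where "p < L" "l < T" "j < m" and t: "transpose_blocks T m L q = (l * L + p) * m + j"
    by (rule transpose_blocks_decomp)
  then have "(l * L + p) * m + j < (T * L) * m"
    by (intro block_index_less) (simp_all add: block_index_less)
  with t show ?thesis by (simp add: algebra_simps)
qed

lemma inj_transpose_blocks: "inj (transpose_blocks T m L)"
proof (rule injI)
  fix x y assume e: "transpose_blocks T m L x = transpose_blocks T m L y"
  consider "x < T * m * L" "y < T * m * L" | "\<not> x < T * m * L \<or> \<not> y < T * m * L"
    by blast
  then show "x = y"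
  proof cases
    case 1
    obtain p l j where A: "p < L" "l < T" "j < m" "x = p * (T * m) + (l * m + j)"
      "transpose_blocks T m L x = (l * L + p) * m + j"
      using 1(1) by (rule transpose_blocks_decomp)
    obtain p' l' j' where B: "p' < L" "l' < T" "j' < m" "y = p' * (T * m) + (l' * m + j')"
      "transpose_blocks T m L y = (l' * L + p') * m + j'"
      using 1(2) by (rule transpose_blocks_decomp)
    have "(l * L + p) * m + j = (l' * L + p') * m + j'"
      using e A(5) B(5) by simp
    then have "l * L + p = l' * L + p'" "j = j'"
      using div_mod_mult_add[OF A(3), of "l * L + p"] div_mod_mult_add[OF B(3), of "l' * L + p'"]
      by metis+
    then have "l = l'" "p = p'"
      using div_mod_mult_add[OF A(1), of l] div_mod_mult_add[OF B(1), of l'] by metis+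
    with A(4) B(4) \<open>j = j'\<close> show ?thesis by simp
  next
    case 2
    with e transpose_blocks_less[of x T m L] transpose_blocks_less[of y T m L] show ?thesis
      by (auto simp: transpose_blocks_def split: if_splits)
  qed
qed

lemma satl_concat_block_seq:
  assumes lb: "\<And>i. length (b i) = m" and fv: "fv \<phi> \<subseteq> {..<T * m * length is}"
  shows "satl M \<phi> (concat (map (block_seq T hs b) is)) =
    satl M (ren (transpose_blocks T m (length is)) \<phi>) (concat (map b (block_indices T hs is)))"
proof (rule satl_ren[OF inj_transpose_blocks fv, symmetric])
  fix v assume v: "v \<in> {..<T * m * length is}"
  let ?L = "length is"
  obtain p l j where A: "p < ?L" "l < T" "j < m" "v = p * (T * m) + (l * m + j)"
    and t: "transpose_blocks T m ?L v = (l * ?L + p) * m + j"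
    using v by (auto elim: transpose_blocks_decomp)
  have "concat (map (block_seq T hs b) is) ! v = b (hs l (is ! p)) ! j"
    using A lb by (simp add: nth_concat_uniform length_block_seq nth_block_seq block_index_less)
  moreover have "concat (map b (block_indices T hs is)) ! ((l * ?L + p) * m + j) = b (hs l (is ! p)) ! j"
    using A lb block_index_less[OF A(2,1)]
    by (simp add: nth_concat_uniform length_block_indices nth_block_indices)
  moreover have "length (concat (map b (block_indices T hs is))) = T * m * ?L"
    by (subst length_concat_uniform) (auto simp: lb length_block_indices)
  moreover have "length (concat (map (block_seq T hs b) is)) = T * m * ?L"
    by (subst length_concat_uniform) (auto simp: length_block_seq[OF lb])
  ultimately show "transpose_blocks T m ?L v < length (concat (map b (block_indices T hs is))) \<and>
      v < length (concat (map (block_seq T hs b) is)) \<and>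
      concat (map b (block_indices T hs is)) ! transpose_blocks T m ?L v =
        concat (map (block_seq T hs b) is) ! v"
    using v t transpose_blocks_less[of v T m ?L] by simp
qed

lemma indiscernible_block_seq:
  fixes M :: "('a, 'f, 'r) fo_struct"
  assumes ind: "indiscernible M m b"
    and mono: "\<And>l. l < T \<Longrightarrow> strict_mono (hs l)"
    and sep: "\<And>l l' i i'. l < l' \<Longrightarrow> l' < T \<Longrightarrow> hs l i < hs l' i'"
  shows "indiscernible M (T * m) (block_seq T hs b)"
  unfolding indiscernible_def
proof (intro conjI allI impI)
  have lb: "\<And>i. length (b i) = m" using ind by (rule length_indiscernible)
  fix i
  show "block_seq T hs b i \<in> tuples M (T * m)"
    using ind lb length_block_seq[OF lb] unfolding tuples_def indiscernible_def block_seq_def by auto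
next
  have lb: "\<And>i. length (b i) = m" using ind by (rule length_indiscernible)
  fix \<phi> :: "('f, 'r) fm" and "is" js :: "rat list"
  assume H: "sorted_wrt (<) is \<and> sorted_wrt (<) js \<and> length is = length js \<and>
    fv \<phi> \<subseteq> {..<T * m * length is}"
  then have lens: "length is = length js" and fv: "fv \<phi> \<subseteq> {..<T * m * length is}"
    by blast+
  let ?\<psi> = "ren (transpose_blocks T m (length is)) \<phi>"
  have "fv ?\<psi> \<subseteq> {..<m * length (block_indices T hs is)}"
    using H transpose_blocks_less
    by (auto simp: fv_ren[OF inj_transpose_blocks] length_block_indices algebra_simps)
  moreover have "sorted_wrt (<) (block_indices T hs is)" "sorted_wrt (<) (block_indices T hs js)"
    using H by (auto intro!: sorted_block_indices mono sep)
  moreover have "length (block_indices T hs is) = length (block_indices T hs js)"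
    using H by (simp add: length_block_indices)
  ultimately have eq: "satl M ?\<psi> (concat (map b (block_indices T hs is))) =
      satl M ?\<psi> (concat (map b (block_indices T hs js)))"
    using ind unfolding indiscernible_def by blast
  have "satl M \<phi> (concat (map (block_seq T hs b) is)) =
      satl M ?\<psi> (concat (map b (block_indices T hs is)))"
    by (rule satl_concat_block_seq[OF lb fv])
  also note eq
  also have "satl M ?\<psi> (concat (map b (block_indices T hs js))) =
      satl M \<phi> (concat (map (block_seq T hs b) js))"
    using satl_concat_block_seq[of b m \<phi> T js M hs, OF lb] fv lens by simp
  finally show "satl M \<phi> (concat (map (block_seq T hs b) is)) =
      satl M \<phi> (concat (map (block_seq T hs b) js))" .
qed

definition fm_xor :: "('f, 'r) fm \<Rightarrow> ('f, 'r) fm \<Rightarrow> ('f, 'r) fm" where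
  "fm_xor A B = Neg (Conj (Neg (Conj A (Neg B))) (Neg (Conj (Neg A) B)))"

fun fm_xor_list :: "('f, 'r) fm list \<Rightarrow> ('f, 'r) fm" where
  "fm_xor_list [] = FF"
| "fm_xor_list (\<phi> # \<phi>s) = fm_xor \<phi> (fm_xor_list \<phi>s)"

lemma sat_fm_xor_list: "sat M e (fm_xor_list \<phi>s) = xor_list (map (sat M e) \<phi>s)"
  by (induction \<phi>s) (auto simp: fm_xor_def xor_list_def)

lemma fv_fm_xor_list: "fv (fm_xor_list \<phi>s) = (\<Union>\<phi>\<in>set \<phi>s. fv \<phi>)"
  by (induction \<phi>s) (auto simp: fm_xor_def)

definition embed_block :: "nat \<Rightarrow> nat \<Rightarrow> nat \<Rightarrow> nat \<Rightarrow> nat \<Rightarrow> nat" where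
  "embed_block k m N l q =
     (if q < m then k + l * m + q else if q < m + k then q - m else q + (k + N * m))"

lemma inj_embed_block: "l < N \<Longrightarrow> inj (embed_block k m N l)"
proof (rule injI)
  fix x y assume lN: "l < N" and e: "embed_block k m N l x = embed_block k m N l y"
  have b: "k + l * m + q < k + N * m" if "q < m" for q
    using block_index_less[OF lN that] by simp
  show "x = y"
    using e b[of x] b[of y] unfolding embed_block_def by (auto split: if_splits)
qed

lemma satl_ren_embed_block:
  assumes lN: "l < N" and fv: "fv \<psi> \<subseteq> {..<m + k}" and la: "length a = k"
    and lb: "\<And>i. length (b i) = m"
  shows "satl M (ren (embed_block k m N l) \<psi>) (a @ block_seq N hs b i) =
    satl M \<psi> (b (hs l i) @ a)"
proof (rule satl_ren[OF inj_embed_block[OF lN] fv])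
  fix v assume v: "v \<in> {..<m + k}"
  have lb': "length (block_seq N hs b i) = N * m"
    by (rule length_block_seq[OF lb])
  show "embed_block k m N l v < length (a @ block_seq N hs b i) \<and> v < length (b (hs l i) @ a) \<and>
        (a @ block_seq N hs b i) ! embed_block k m N l v = (b (hs l i) @ a) ! v"
  proof (cases "v < m")
    case True
    have "block_seq N hs b i ! (l * m + v) = b (hs l i) ! v"
      using lN True by (rule nth_block_seq[of b m, OF lb])
    then show ?thesis using True block_index_less[OF lN True] la lb' lb
      by (simp add: embed_block_def nth_append add.assoc)
  next
    case False
    then show ?thesis using v la lb' lb by (auto simp: embed_block_def nth_append)
  qed
qed

lemma fv_ren_embed_block:
  "l < N \<Longrightarrow> fv \<psi> \<subseteq> {..<m + k} \<Longrightarrow> fv (ren (embed_block k m N l) \<psi>) \<subseteq> {..<k + N * m}"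
  using block_index_less[of l N] by (force simp: fv_ren[OF inj_embed_block] embed_block_def)

lemma xor_formula_block_seq:
  assumes la: "length a = k" and lb: "\<And>i. length (b i) = m"
    and fv: "\<And>l. l < N \<Longrightarrow> fv (\<psi>s l) \<subseteq> {..<m + k}"
  shows "\<exists>\<phi>. fv \<phi> \<subseteq> {..<k + N * m} \<and>
    (\<forall>i. satl M \<phi> (a @ block_seq N hs b i) =
      xor_list (map (\<lambda>l. satl M (\<psi>s l) (b (hs l i) @ a)) [0..<N]))"
proof (intro exI conjI allI)
  let ?\<phi> = "fm_xor_list (map (\<lambda>l. ren (embed_block k m N l) (\<psi>s l)) [0..<N])"
  show "fv ?\<phi> \<subseteq> {..<k + N * m}"
    using fv_ren_embed_block[OF _ fv] by (fastforce simp: fv_fm_xor_list)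
  fix i
  have "satl M ?\<phi> (a @ block_seq N hs b i) =
      xor_list (map (\<lambda>l. satl M (ren (embed_block k m N l) (\<psi>s l)) (a @ block_seq N hs b i)) [0..<N])"
    by (simp add: satl_def sat_fm_xor_list comp_def)
  also have "\<dots> = xor_list (map (\<lambda>l. satl M (\<psi>s l) (b (hs l i) @ a)) [0..<N])"
    using satl_ren_embed_block[OF _ fv la lb] by (intro arg_cong[where f = xor_list] map_cong) auto
  finally show "satl M ?\<phi> (a @ block_seq N hs b i) =
      xor_list (map (\<lambda>l. satl M (\<psi>s l) (b (hs l i) @ a)) [0..<N])" .
qed

lemma local_dp_rank_leD:
  assumes "local_dp_rank_le M k p \<phi> m n" "realizes M k a p" "indiscernible M m b"
  obtains C where "finite C" "card C \<le> n" "sim_invariant C (\<lambda>i. satl M \<phi> (a @ b i))"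
  using assms unfolding local_dp_rank_le_def sim_invariant_def by blast

lemma sim_invariant_type_if_local_dp_rank_le:
  assumes loc: "\<forall>m \<phi>. fv \<phi> \<subseteq> {..<k + m} \<longrightarrow> local_dp_rank_le M k p \<phi> m n"
    and a: "realizes M k a p" and b: "indiscernible M m b" and \<psi>: "fv \<psi> \<subseteq> {..<m + k}"
  shows "\<exists>C. finite C \<and> card C \<le> n \<and> sim_invariant C (\<lambda>i. satl M \<psi> (b i @ a))"
proof -
  let ?\<psi>' = "ren (swap_blocks m k) \<psi>"
  have "local_dp_rank_le M k p ?\<psi>' m n"
    using loc fv_ren_swap_blocks[OF \<psi>] by (simp add: add.commute)
  then obtain C where "finite C" "card C \<le> n" "sim_invariant C (\<lambda>i. satl M ?\<psi>' (a @ b i))"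
    using a b by (elim local_dp_rank_leD)
  moreover have "satl M ?\<psi>' (a @ b i) = satl M \<psi> (b i @ a)" for i
    using \<psi> length_indiscernible[OF b] length_realizes[OF a] by (rule satl_ren_swap_blocks)
  ultimately show ?thesis by auto
qed

lemma sim_invariant_xor_if_local_dp_rank_le:
  assumes loc: "\<forall>m \<phi>. fv \<phi> \<subseteq> {..<k + m} \<longrightarrow> local_dp_rank_le M k p \<phi> m n"
    and a: "realizes M k a p" and b: "indiscernible M m b"
    and \<psi>s: "\<And>l. l < N \<Longrightarrow> fv (\<psi>s l) \<subseteq> {..<m + k}"
    and mono: "\<And>l. l < N \<Longrightarrow> strict_mono (hs l)"
    and sep: "\<And>l l' i i'. l < l' \<Longrightarrow> l' < N \<Longrightarrow> hs l i < hs l' i'"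
  shows "\<exists>C. finite C \<and> card C \<le> n \<and>
    sim_invariant C (\<lambda>i. xor_list (map (\<lambda>l. satl M (\<psi>s l) (b (hs l i) @ a)) [0..<N]))"
proof -
  have lb: "\<And>i. length (b i) = m" using b by (rule length_indiscernible)
  from xor_formula_block_seq[where b = b and M = M and hs = hs and N = N and \<psi>s = \<psi>s,
      OF length_realizes[OF a] lb \<psi>s]
  obtain \<phi> where fv\<phi>: "fv \<phi> \<subseteq> {..<k + N * m}"
    and sat\<phi>: "\<forall>i. satl M \<phi> (a @ block_seq N hs b i) =
      xor_list (map (\<lambda>l. satl M (\<psi>s l) (b (hs l i) @ a)) [0..<N])"
    by blast
  have "indiscernible M (N * m) (block_seq N hs b)"
    using b mono sep by (rule indiscernible_block_seq)
  moreover have "local_dp_rank_le M k p \<phi> (N * m) n"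
    using loc fv\<phi> by blast
  ultimately obtain C where "finite C" "card C \<le> n"
    and "sim_invariant C (\<lambda>i. satl M \<phi> (a @ block_seq N hs b i))"
    using a by (elim local_dp_rank_leD)
  with sat\<phi> show ?thesis by auto
qed

lemma dp_rank_le_if_local_dp_rank_le:
  fixes M :: "('a, 'f, 'r) fo_struct"
  assumes loc: "\<forall>m \<phi>. fv \<phi> \<subseteq> {..<k + m} \<longrightarrow> local_dp_rank_le M k p \<phi> m n"
  shows "dp_rank_le M k p n"
  unfolding dp_rank_le_def
proof (intro allI impI)
  fix a m b assume "realizes M k a p \<and> indiscernible M m b"
  then have a: "realizes M k a p" and b: "indiscernible M m b" by blast+
  define tp where "tp \<psi> = (\<lambda>i. satl M \<psi> (b i @ a))" for \<psi>
  define F where "F = tp ` {\<psi>. fv \<psi> \<subseteq> {..<m + k}}"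
  have "finite (\<Union>f\<in>F. breakpoints f) \<and> card (\<Union>f\<in>F. breakpoints f) \<le> n"
  proof (rule card_Union_breakpoints_le)
    show "\<exists>C. finite C \<and> sim_invariant C f" if "f \<in> F" for f
      using that sim_invariant_type_if_local_dp_rank_le[OF loc a b] unfolding F_def tp_def by blast
  next
    fix N :: nat and fs :: "nat \<Rightarrow> rat \<Rightarrow> bool" and hs :: "nat \<Rightarrow> rat \<Rightarrow> rat"
    assume fs: "\<And>l. l < N \<Longrightarrow> fs l \<in> F"
      and mono: "\<And>l. l < N \<Longrightarrow> strict_mono (hs l)"
      and sep: "\<And>l l' i i'. l < l' \<Longrightarrow> l' < N \<Longrightarrow> hs l i < hs l' i'"
    have "\<forall>l\<in>{..<N}. \<exists>\<psi>. fv \<psi> \<subseteq> {..<m + k} \<and> fs l = tp \<psi>"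
      using fs unfolding F_def by blast
    from bchoice[OF this] obtain \<psi>s
      where \<psi>s: "\<forall>l\<in>{..<N}. fv (\<psi>s l) \<subseteq> {..<m + k} \<and> fs l = tp (\<psi>s l)"
      by blast
    have eq: "(\<lambda>i. xor_list (map (\<lambda>l. fs l (hs l i)) [0..<N])) =
        (\<lambda>i. xor_list (map (\<lambda>l. satl M (\<psi>s l) (b (hs l i) @ a)) [0..<N]))"
      using \<psi>s by (intro ext arg_cong[where f = xor_list] map_cong) (auto simp: tp_def)
    have "\<And>l. l < N \<Longrightarrow> fv (\<psi>s l) \<subseteq> {..<m + k}"
      using \<psi>s by blast
    then show "\<exists>C. finite C \<and> card C \<le> n \<and>
        sim_invariant C (\<lambda>i. xor_list (map (\<lambda>l. fs l (hs l i)) [0..<N]))"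
      unfolding eq by (rule sim_invariant_xor_if_local_dp_rank_le[OF loc a b _ mono sep])
  qed
  then show "\<exists>C. finite C \<and> card C \<le> n \<and> (\<forall>i j. sim C i j \<longrightarrow> same_tp M m (b i) (b j) a)"
  proof (intro exI[of _ "\<Union>f\<in>F. breakpoints f"] conjI allI impI)
    fix i j assume ij: "sim (\<Union>f\<in>F. breakpoints f) i j"
    show "same_tp M m (b i) (b j) a"
      unfolding same_tp_def
    proof (intro allI impI)
      fix \<psi> :: "('f, 'r) fm" assume "fv \<psi> \<subseteq> {..<m + length a}"
      then have \<psi>: "fv \<psi> \<subseteq> {..<m + k}" using length_realizes[OF a] by simp
      then obtain C where "finite C" "sim_invariant C (tp \<psi>)"
        using sim_invariant_type_if_local_dp_rank_le[OF loc a b] unfolding tp_def by blast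
      then have "sim_invariant (breakpoints (tp \<psi>)) (tp \<psi>)"
        by (rule sim_invariant_breakpoints)
      moreover have "breakpoints (tp \<psi>) \<subseteq> (\<Union>f\<in>F. breakpoints f)"
        using \<psi> unfolding F_def by blast
      ultimately have "sim_invariant (\<Union>f\<in>F. breakpoints f) (tp \<psi>)"
        by (rule sim_invariant_mono[rotated])
      with ij show "satl M \<psi> (b i @ a) = satl M \<psi> (b j @ a)"
        unfolding sim_invariant_def tp_def by blast
    qed
  qed blast+
qed

theorem proposition2p3:
  fixes M :: "('a, 'f, 'r) fo_struct"
    and p :: "(('f, 'r) fm \<times> 'a list) set"
    and k n :: nat
  assumes "monster M"
    and "partial_type M k p"
  shows "dp_rank_le M k p n \<longleftrightarrow>
         (\<forall>m \<phi>. fv \<phi> \<subseteq> {..<k + m} \<longrightarrow> local_dp_rank_le M k p \<phi> m n)"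
  using local_dp_rank_le_if_dp_rank_le dp_rank_le_if_local_dp_rank_le by blast

end
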